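(* Let $X=\{x_j:j\in J\}\subset\mathbb{R}^2$ be finite with $n=|J|$. If there exist weights $\tau_j\geq\frac{1}{n+1}$ ($j\in J$) with $\sum_j\tau_j=1$ and $s=\sum_j\tau_jx_j$, then $s\in\mathrm{conv}(\mathcal{M})$.
   Context: $\mathcal{M}=\{M_j:j\in J\}$ with $M_j=\frac{1}{n+1}\big(x_j+\sum_{i\in J}x_i\big)$. *)

theory Defs
  imports "HOL-Analysis.Analysis"
begin

definition M_point :: "('j \<Rightarrow> real^2) \<Rightarrow> 'j set \<Rightarrow> 'j \<Rightarrow> real^2" where
  "M_point x J j = (1 / (real (card J) + 1)) *\<^sub>R (x j + (\<Sum>i\<in>J. x i))"

end

theory Submission
  imports Defs
begin

text \<open>With \<open>N = n + 1\<close> and \<open>S = \<Sum>\<^sub>i x\<^sub>i\<close>, the weights \<open>\<mu>\<^sub>j = N \<tau>\<^sub>j - 1\<close> are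
  nonnegative exactly because \<open>\<tau>\<^sub>j \<ge> 1/N\<close>, and they sum to \<open>N - n = 1\<close>.
  Moreover \<open>\<Sum>\<^sub>j \<mu>\<^sub>j (x\<^sub>j + S)/N = (N s - S + S)/N = s\<close>, so these weights
  exhibit \<open>s\<close> as a convex combination of the points \<open>M\<^sub>j = (x\<^sub>j + S)/N\<close>.\<close>

lemma sum_rescaled_weights_eq_1:
  fixes J :: "'j set"
  defines "N \<equiv> real (card J) + 1"
  assumes "(\<Sum>j\<in>J. \<tau> j) = 1"
  shows "(\<Sum>j\<in>J. N * \<tau> j - 1) = 1"
  using assms(2) by (simp add: sum_subtractf sum_distrib_left[symmetric] N_def)

lemma sum_rescaled_weights_shifted_points:
  fixes x :: "'j \<Rightarrow> 'a::real_vector" and J :: "'j set"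
  defines "N \<equiv> real (card J) + 1"
  assumes "(\<Sum>j\<in>J. \<tau> j) = 1"
  shows "(\<Sum>j\<in>J. (N * \<tau> j - 1) *\<^sub>R ((1 / N) *\<^sub>R (x j + (\<Sum>i\<in>J. x i))))
       = (\<Sum>j\<in>J. \<tau> j *\<^sub>R x j)"
proof -
  define S where "S = (\<Sum>i\<in>J. x i)"
  have N_pos: "N > 0" unfolding N_def by simp
  have weights_sum: "(\<Sum>j\<in>J. N * \<tau> j - 1) = 1"
    using sum_rescaled_weights_eq_1[OF assms(2)] by (simp add: N_def)
  have "(\<Sum>j\<in>J. (N * \<tau> j - 1) *\<^sub>R ((1 / N) *\<^sub>R (x j + S)))
      = (1 / N) *\<^sub>R ((\<Sum>j\<in>J. (N * \<tau> j - 1) *\<^sub>R x j) + (\<Sum>j\<in>J. N * \<tau> j - 1) *\<^sub>R S)"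
    by (simp add: scaleR_add_right sum.distrib scaleR_right.sum scaleR_sum_left)
  also have "(\<Sum>j\<in>J. (N * \<tau> j - 1) *\<^sub>R x j) = N *\<^sub>R (\<Sum>j\<in>J. \<tau> j *\<^sub>R x j) - S"
    unfolding S_def by (simp add: scaleR_diff_left sum_subtractf scaleR_right.sum)
  finally show ?thesis
    unfolding S_def[symmetric] using weights_sum N_pos by simp
qed

lemma weighted_sum_in_convex_hull_shifted_points:
  fixes x :: "'j \<Rightarrow> 'a::real_vector" and J :: "'j set"
  defines "N \<equiv> real (card J) + 1"
  assumes "finite J" and "\<forall>j\<in>J. \<tau> j \<ge> 1 / N" and "(\<Sum>j\<in>J. \<tau> j) = 1"
  shows "(\<Sum>j\<in>J. \<tau> j *\<^sub>R x j)
       \<in> convex hull ((\<lambda>j. (1 / N) *\<^sub>R (x j + (\<Sum>i\<in>J. x i))) ` J)"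
proof -
  have N_pos: "N > 0" unfolding N_def by simp
  have weights_nonneg: "\<forall>j\<in>J. 0 \<le> N * \<tau> j - 1"
    using assms(3) N_pos by (simp add: field_simps)
  have weights_sum: "(\<Sum>j\<in>J. N * \<tau> j - 1) = 1"
    using sum_rescaled_weights_eq_1[OF assms(4)] by (simp add: N_def)
  have "(\<Sum>j\<in>J. (N * \<tau> j - 1) *\<^sub>R ((1 / N) *\<^sub>R (x j + (\<Sum>i\<in>J. x i))))
      \<in> convex hull ((\<lambda>j. (1 / N) *\<^sub>R (x j + (\<Sum>i\<in>J. x i))) ` J)"
    by (rule convex_sum)
      (use assms(2) weights_nonneg weights_sum in \<open>auto intro: hull_subset[THEN subsetD]\<close>)
  then show ?thesis
    unfolding N_def sum_rescaled_weights_shifted_points[OF assms(4)] .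
qed

theorem lemma7:
  fixes x :: "'j \<Rightarrow> real^2" and J :: "'j set" and \<tau> :: "'j \<Rightarrow> real" and s :: "real^2"
  assumes "finite J"
    and "inj_on x J"
    and "\<forall>j\<in>J. \<tau> j \<ge> 1 / (real (card J) + 1)"
    and "(\<Sum>j\<in>J. \<tau> j) = 1"
    and "s = (\<Sum>j\<in>J. \<tau> j *\<^sub>R x j)"
  shows "s \<in> convex hull (M_point x J ` J)"
  using weighted_sum_in_convex_hull_shifted_points[OF assms(1,3,4), of x]
  unfolding assms(5) M_point_def by simp

end
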